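(* Let $\ell$ be a prime, $\nu\ge1$, and $R$ a $\mathbb{Z}/\ell^\nu$-algebra. Let $L'$ be the free $R$-module with basis $\alpha_0,\alpha_1,\dots,\alpha_{\ell-1}$ and $L\subseteq L'$ the submodule spanned by $\alpha_1,\dots,\alpha_{\ell-1}$. For $k\ge0$ define $b_k:L'\to L'$ by $b_k(\alpha_i)=(k\ell+i)\alpha_i+(k\ell+i+1)\alpha_{i+1}$ for $0\le i\le \ell-2$ and $b_k(\alpha_{\ell-1})=(k\ell+\ell-1)\alpha_{\ell-1}$ (so $b_k(L)\subseteq L$). Then for every $k\ge0$ the natural maps $L\to L[1/b_k]\to L'[1/b_k]$ are isomorphisms, where $M[1/b_k]$ denotes the colimit of $M\xrightarrow{b_k}M\xrightarrow{b_k}M\to\cdots$. *)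

theory Defs
  imports "HOL-Computational_Algebra.Primes"
begin

text \<open>Elements of the free R-module L' with basis alpha_0..alpha_(l-1) are represented
  by their coefficient functions nat => R, vanishing from index l on.\<close>

definition alpha :: "nat \<Rightarrow> nat \<Rightarrow> 'a::comm_ring_1" where
  "alpha i = (\<lambda>j. if j = i then 1 else 0)"

definition Lprime :: "nat \<Rightarrow> (nat \<Rightarrow> 'a::comm_ring_1) set" where
  "Lprime l = {f. \<forall>j\<ge>l. f j = 0}"

definition Lsub :: "nat \<Rightarrow> (nat \<Rightarrow> 'a::comm_ring_1) set" where
  "Lsub l = {f. f \<in> Lprime l \<and> f 0 = 0}"

definition bimg :: "nat \<Rightarrow> nat \<Rightarrow> nat \<Rightarrow> nat \<Rightarrow> 'a::comm_ring_1" where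
  "bimg l k i = (if i + 2 \<le> l
      then (\<lambda>j. of_nat (k*l + i) * alpha i j + of_nat (k*l + i + 1) * alpha (i+1) j)
      else (\<lambda>j. of_nat (k*l + l - 1) * alpha (l - 1) j))"

definition bmap :: "nat \<Rightarrow> nat \<Rightarrow> (nat \<Rightarrow> 'a::comm_ring_1) \<Rightarrow> (nat \<Rightarrow> 'a)" where
  "bmap l k f = (\<lambda>j. \<Sum>i<l. f i * bimg l k i j)"

text \<open>Colimit M[1/g] of M --g--> M --g--> M --> ...: pairs (n,x) (x in the n-th copy),
  with (n,x) ~ (m,y) iff they become equal in some later copy.\<close>
definition dirlim_rel :: "'m set \<Rightarrow> ('m \<Rightarrow> 'm) \<Rightarrow> ((nat \<times> 'm) \<times> (nat \<times> 'm)) set" where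
  "dirlim_rel M g = {((n,x),(m,y)). x \<in> M \<and> y \<in> M \<and>
      (\<exists>N. n \<le> N \<and> m \<le> N \<and> (g ^^ (N - n)) x = (g ^^ (N - m)) y)}"

definition dirlim :: "'m set \<Rightarrow> ('m \<Rightarrow> 'm) \<Rightarrow> (nat \<times> 'm) set set" where
  "dirlim M g = (UNIV \<times> M) // dirlim_rel M g"

definition dirlim_in :: "'m set \<Rightarrow> ('m \<Rightarrow> 'm) \<Rightarrow> 'm \<Rightarrow> (nat \<times> 'm) set" where
  "dirlim_in M g x = dirlim_rel M g `` {(0, x)}"

text \<open>Natural map M[1/g] -> M'[1/g] induced by an inclusion M \<subseteq> M' (g-stable):
  the class of (n,x) goes to the class of (n,x).\<close>
definition dirlim_incl :: "'m set \<Rightarrow> ('m \<Rightarrow> 'm) \<Rightarrow> (nat \<times> 'm) set \<Rightarrow> (nat \<times> 'm) set" where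
  "dirlim_incl M' g A = dirlim_rel M' g `` A"

end

theory Submission
  imports Defs
begin

text \<open>Away from coordinate 0, \<open>b\<^sub>k\<close> is lower bidiagonal with diagonal entries \<open>k\<ell> + j\<close>,
  which are prime to \<open>\<ell>\<close> and hence units of \<open>R\<close>; so \<open>b\<^sub>k\<close> is an automorphism of \<open>L\<close> and
  \<open>L \<rightarrow> L[1/b\<^sub>k]\<close> is bijective. On \<open>L'/L\<close>, which is the coordinate 0, \<open>b\<^sub>k\<close> acts as
  multiplication by \<open>k\<ell>\<close>, and \<open>(k\<ell>)\<^sup>\<nu> = 0\<close> in \<open>R\<close>; hence \<open>b\<^sub>k\<^sup>\<nu>\<close> maps \<open>L'\<close> into \<open>L\<close>, which
  makes \<open>L[1/b\<^sub>k] \<rightarrow> L'[1/b\<^sub>k]\<close> bijective.\<close>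

lemma funpow_diff_eq:
  assumes "n \<le> N" "N \<le> N'"
  shows "(g ^^ (N' - n)) x = (g ^^ (N' - N)) ((g ^^ (N - n)) x)"
proof -
  have "N' - n = (N' - N) + (N - n)" using assms by simp
  then show ?thesis by (simp add: funpow_add)
qed

lemma equiv_dirlim_rel: "equiv (UNIV \<times> M) (dirlim_rel M g)"
proof (rule equivI)
  show "refl_on (UNIV \<times> M) (dirlim_rel M g)"
    by (auto simp: refl_on_def dirlim_rel_def)
  show "sym (dirlim_rel M g)"
    by (auto simp: sym_def dirlim_rel_def)
  show "trans (dirlim_rel M g)"
  proof (rule transI, clarify)
    fix a x b y c z
    assume "((a, x), (b, y)) \<in> dirlim_rel M g" "((b, y), (c, z)) \<in> dirlim_rel M g"
    then obtain N1 N2 where N: "x \<in> M" "z \<in> M" "a \<le> N1" "b \<le> N1" "b \<le> N2" "c \<le> N2"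
      "(g ^^ (N1 - a)) x = (g ^^ (N1 - b)) y" "(g ^^ (N2 - b)) y = (g ^^ (N2 - c)) z"
      unfolding dirlim_rel_def by auto
    define N where "N = max N1 N2"
    have "N1 \<le> N" "N2 \<le> N" by (simp_all add: N_def)
    have "(g ^^ (N - a)) x = (g ^^ (N - N1)) ((g ^^ (N1 - a)) x)"
      using N(3) \<open>N1 \<le> N\<close> by (rule funpow_diff_eq)
    also have "\<dots> = (g ^^ (N - b)) y"
      unfolding N(7) by (rule funpow_diff_eq[OF N(4) \<open>N1 \<le> N\<close>, symmetric])
    also have "\<dots> = (g ^^ (N - N2)) ((g ^^ (N2 - b)) y)"
      using N(5) \<open>N2 \<le> N\<close> by (rule funpow_diff_eq)
    also have "\<dots> = (g ^^ (N - c)) z"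
      unfolding N(8) by (rule funpow_diff_eq[OF N(6) \<open>N2 \<le> N\<close>, symmetric])
    finally show "((a, x), (c, z)) \<in> dirlim_rel M g"
      using N \<open>N1 \<le> N\<close> \<open>N2 \<le> N\<close> unfolding dirlim_rel_def by (auto intro!: exI[of _ N])
  qed
qed (auto simp: dirlim_rel_def)

lemma dirlim_rel_Image_eq_iff:
  "x \<in> M \<Longrightarrow> y \<in> M \<Longrightarrow>
    dirlim_rel M g `` {(n, x)} = dirlim_rel M g `` {(m, y)} \<longleftrightarrow> ((n, x), (m, y)) \<in> dirlim_rel M g"
  by (simp add: eq_equiv_class_iff[OF equiv_dirlim_rel])

lemma dirlimE:
  assumes "X \<in> dirlim M g"
  obtains n x where "x \<in> M" "X = dirlim_rel M g `` {(n, x)}"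
  using assms unfolding dirlim_def by (auto elim: quotientE)

lemma dirlimI: "x \<in> M \<Longrightarrow> dirlim_rel M g `` {(n, x)} \<in> dirlim M g"
  unfolding dirlim_def by (auto intro: quotientI)

lemma bij_betw_dirlim_in:
  assumes "bij_betw g M M"
  shows "bij_betw (dirlim_in M g) M (dirlim M g)"
proof (rule bij_betw_imageI)
  show "inj_on (dirlim_in M g) M"
  proof (rule inj_onI)
    fix x y assume "x \<in> M" "y \<in> M" "dirlim_in M g x = dirlim_in M g y"
    then have "((0, x), (0, y)) \<in> dirlim_rel M g"
      by (simp add: dirlim_in_def dirlim_rel_Image_eq_iff)
    then obtain N where "(g ^^ N) x = (g ^^ N) y"
      unfolding dirlim_rel_def by auto
    with \<open>x \<in> M\<close> \<open>y \<in> M\<close> show "x = y"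
      using bij_betw_funpow[OF assms, of N] by (meson bij_betw_def inj_onD)
  qed
  show "dirlim_in M g ` M = dirlim M g"
  proof (intro equalityI subsetI)
    fix X assume "X \<in> dirlim M g"
    then obtain n x where x: "x \<in> M" "X = dirlim_rel M g `` {(n, x)}"
      by (rule dirlimE)
    \<comment> \<open>since \<open>g\<close> is onto, the element \<open>x\<close> of the \<open>n\<close>-th copy comes from the 0-th copy\<close>
    then obtain y where y: "y \<in> M" "(g ^^ n) y = x"
      using bij_betw_funpow[OF assms, of n] by (metis bij_betw_iff_bijections)
    then have "((n, x), (0, y)) \<in> dirlim_rel M g"
      using x unfolding dirlim_rel_def by auto
    then have "X = dirlim_in M g y"
      using x y by (simp add: dirlim_in_def dirlim_rel_Image_eq_iff)
    with y show "X \<in> dirlim_in M g ` M" by blast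
  qed (auto simp: dirlim_in_def intro: dirlimI)
qed

lemma dirlim_incl_class:
  assumes "M \<subseteq> M'" "x \<in> M"
  shows "dirlim_incl M' g (dirlim_rel M g `` {(n, x)}) = dirlim_rel M' g `` {(n, x)}"
proof -
  have "dirlim_rel M g \<subseteq> dirlim_rel M' g"
    using assms(1) unfolding dirlim_rel_def by auto
  moreover have "(n, x) \<in> dirlim_rel M g `` {(n, x)}"
    using equiv_class_self[OF equiv_dirlim_rel] assms(2) by blast
  moreover have "trans (dirlim_rel M' g)"
    using equiv_dirlim_rel by (rule equivE)
  ultimately show ?thesis
    unfolding dirlim_incl_def by (auto dest: transD)
qed

lemma bij_betw_dirlim_incl:
  assumes sub: "M \<subseteq> M'" and into: "\<And>x. x \<in> M' \<Longrightarrow> (g ^^ v) x \<in> M"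
  shows "bij_betw (dirlim_incl M' g) (dirlim M g) (dirlim M' g)"
proof (rule bij_betw_imageI)
  show "inj_on (dirlim_incl M' g) (dirlim M g)"
  proof (rule inj_onI)
    fix X Y assume "X \<in> dirlim M g" "Y \<in> dirlim M g" "dirlim_incl M' g X = dirlim_incl M' g Y"
    moreover obtain n x where x: "x \<in> M" "X = dirlim_rel M g `` {(n, x)}"
      using \<open>X \<in> dirlim M g\<close> by (rule dirlimE)
    moreover obtain m y where y: "y \<in> M" "Y = dirlim_rel M g `` {(m, y)}"
      using \<open>Y \<in> dirlim M g\<close> by (rule dirlimE)
    moreover have "x \<in> M'" "y \<in> M'" using x y sub by auto
    ultimately have "((n, x), (m, y)) \<in> dirlim_rel M' g"
      using sub by (simp add: dirlim_incl_class dirlim_rel_Image_eq_iff)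
    then have "((n, x), (m, y)) \<in> dirlim_rel M g"
      using x y unfolding dirlim_rel_def by auto
    then show "X = Y"
      using x y by (simp add: dirlim_rel_Image_eq_iff)
  qed
  show "dirlim_incl M' g ` dirlim M g = dirlim M' g"
  proof (intro equalityI subsetI)
    fix Z assume "Z \<in> dirlim_incl M' g ` dirlim M g"
    then show "Z \<in> dirlim M' g"
      using sub by (auto elim!: dirlimE simp: dirlim_incl_class intro!: dirlimI)
  next
    fix Z assume "Z \<in> dirlim M' g"
    then obtain n x where x: "x \<in> M'" "Z = dirlim_rel M' g `` {(n, x)}"
      by (rule dirlimE)
    \<comment> \<open>\<open>(n, x)\<close> is identified with its image \<open>(n + v, g\<^sup>v x)\<close>, which lies in \<open>M\<close>\<close>
    have y: "(g ^^ v) x \<in> M" using into x(1) .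
    then have "((n, x), (n + v, (g ^^ v) x)) \<in> dirlim_rel M' g"
      using x sub unfolding dirlim_rel_def by (auto intro!: exI[of _ "n + v"])
    moreover have "(g ^^ v) x \<in> M'" using y sub by blast
    ultimately have "Z = dirlim_rel M' g `` {(n + v, (g ^^ v) x)}"
      using x by (simp add: dirlim_rel_Image_eq_iff)
    also have "\<dots> = dirlim_incl M' g (dirlim_rel M g `` {(n + v, (g ^^ v) x)})"
      using sub y by (simp add: dirlim_incl_class)
    finally show "Z \<in> dirlim_incl M' g ` dirlim M g"
      using y by (auto intro: dirlimI)
  qed
qed

lemma of_nat_dvd_1_if_coprime:
  assumes "coprime m n" "(of_nat n :: 'a::comm_ring_1) = 0"
  shows "(of_nat m :: 'a) dvd 1"
proof (cases "m = 0")
  case False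
  obtain x y where "m * x = n * y + gcd m n"
    using bezout_nat[OF False] by blast
  then have "m * x = n * y + 1" using assms(1) by simp
  then have "of_nat m * of_nat x = (of_nat n * of_nat y + 1 :: 'a)"
    by (metis of_nat_1 of_nat_add of_nat_mult)
  then show ?thesis using assms(2) by (metis dvdI mult_zero_left add_0)
qed (use assms in \<open>simp\<close>)

lemma bimg_apply:
  "i < l \<Longrightarrow> (bimg l k i j :: 'a::comm_ring_1) =
     (if j = i then of_nat (k*l + i) else 0) + (if j = i + 1 \<and> j < l then of_nat (k*l + i + 1) else 0)"
  by (cases "i + 2 \<le> l") (auto simp: bimg_def alpha_def)

lemma bmap_apply:
  "(bmap l k f j :: 'a::comm_ring_1) =
     (if j < l then of_nat (k*l + j) * f j else 0)
   + (if 0 < j \<and> j < l then of_nat (k*l + j) * f (j - 1) else 0)"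
proof -
  have "bmap l k f j = (\<Sum>i<l. (if i = j then of_nat (k*l + j) * f j else 0)
     + (if 0 < j \<and> j < l \<and> i = j - 1 then of_nat (k*l + j) * f (j - 1) else 0))"
    unfolding bmap_def by (rule sum.cong) (auto simp: bimg_apply algebra_simps)
  then show ?thesis by (auto simp: sum.distrib)
qed

lemma bmap_Lprime: "bmap l k f \<in> Lprime l"
  by (simp add: Lprime_def bmap_apply)

lemma bmap_Lsub: "bmap l k ` Lsub l \<subseteq> Lsub l"
  by (auto simp: Lsub_def bmap_Lprime bmap_apply)

lemma bij_betw_bmap_Lsub:
  assumes units: "\<And>j. 0 < j \<Longrightarrow> j < l \<Longrightarrow> (of_nat (k*l + j) :: 'a::comm_ring_1) dvd 1"
  shows "bij_betw (bmap l k) (Lsub l :: (nat \<Rightarrow> 'a) set) (Lsub l)"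
proof -
  define c :: "nat \<Rightarrow> 'a" where "c j = of_nat (k*l + j)" for j
  have "\<forall>j. \<exists>v. 0 < j \<and> j < l \<longrightarrow> c j * v = 1"
    using units unfolding c_def by (metis dvdE)
  then obtain u where cu: "\<And>j. 0 < j \<Longrightarrow> j < l \<Longrightarrow> c j * u j = 1"
    by metis
  have bm: "bmap l k f j = c j * (f j + f (j - 1))" if "0 < j" "j < l" for f j
    using that by (simp add: bmap_apply c_def algebra_simps)
  have Lsub_iff: "f \<in> Lsub l \<longleftrightarrow> (\<forall>j. (j = 0 \<or> l \<le> j) \<longrightarrow> f j = 0)" for f :: "nat \<Rightarrow> 'a"
    by (auto simp: Lsub_def Lprime_def)
  have "inj_on (bmap l k) (Lsub l :: (nat \<Rightarrow> 'a) set)"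
  proof (rule inj_onI)
    fix f g :: "nat \<Rightarrow> 'a" assume fg: "f \<in> Lsub l" "g \<in> Lsub l" "bmap l k f = bmap l k g"
    have "f j = g j" for j
    proof (induction j)
      case (Suc j)
      show ?case
      proof (cases "Suc j < l")
        case True
        then have "c (Suc j) * f (Suc j) = c (Suc j) * g (Suc j)"
          using fun_cong[OF fg(3), of "Suc j"] Suc.IH by (simp add: bm distrib_left)
        then have "(u (Suc j) * c (Suc j)) * f (Suc j) = (u (Suc j) * c (Suc j)) * g (Suc j)"
          by (simp add: mult.assoc)
        then show ?thesis using cu[of "Suc j"] True by (simp add: mult.commute)
      qed (use fg in \<open>simp add: Lsub_iff\<close>)
    qed (use fg in \<open>simp add: Lsub_iff\<close>)
    then show "f = g" by blast
  qed
  moreover have "Lsub l \<subseteq> bmap l k ` (Lsub l :: (nat \<Rightarrow> 'a) set)"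
  proof
    fix h :: "nat \<Rightarrow> 'a" assume h: "h \<in> Lsub l"
    \<comment> \<open>forward substitution: \<open>p\<^sub>j = u\<^sub>j h\<^sub>j - p\<^sub>j\<^sub>-\<^sub>1\<close> inverts \<open>h\<^sub>j = c\<^sub>j (p\<^sub>j + p\<^sub>j\<^sub>-\<^sub>1)\<close>\<close>
    define p where "p = rec_nat 0 (\<lambda>i q. if Suc i < l then u (Suc i) * h (Suc i) - q else 0)"
    have p0: "p 0 = 0" and pSuc: "p (Suc i) = (if Suc i < l then u (Suc i) * h (Suc i) - p i else 0)"
      for i by (simp_all add: p_def)
    have "p \<in> Lsub l"
      unfolding Lsub_iff by (metis p0 pSuc not0_implies_Suc leD)
    moreover have "bmap l k p j = h j" for j
    proof (cases "0 < j \<and> j < l")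
      case True
      then obtain i where i: "j = Suc i" using gr0_implies_Suc by blast
      have "bmap l k p j = (c j * u j) * h j"
        using True by (simp add: bm i pSuc algebra_simps)
      then show ?thesis using cu True by simp
    next
      case False
      then show ?thesis using h by (auto simp: Lsub_iff bmap_apply p0)
    qed
    ultimately show "h \<in> bmap l k ` Lsub l" by (metis image_eqI ext)
  qed
  ultimately show ?thesis using bmap_Lsub[of l k] by (metis bij_betw_def subset_antisym)
qed

lemma funpow_bmap_apply_0: "0 < l \<Longrightarrow> ((bmap l k ^^ n) f 0 :: 'a::comm_ring_1) = of_nat (k*l) ^ n * f 0"
  by (induction n) (simp_all add: bmap_apply)

lemma funpow_bmap_Lsub:
  assumes "0 < l" "0 < n" "(of_nat (k*l) :: 'a::comm_ring_1) ^ n = 0"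
  shows "(bmap l k ^^ n) (f :: nat \<Rightarrow> 'a) \<in> Lsub l"
proof -
  obtain m where "n = Suc m" using assms(2) gr0_implies_Suc by blast
  then have "(bmap l k ^^ n) f \<in> Lprime l" by (simp add: bmap_Lprime)
  then show ?thesis using assms by (simp add: Lsub_def funpow_bmap_apply_0)
qed

theorem lemma2p3:
  fixes l \<nu> k :: nat
  assumes "prime l" and "\<nu> \<ge> 1"
    and "(of_nat (l ^ \<nu>) :: 'a::comm_ring_1) = 0"
  shows "bmap l k ` (Lsub l :: (nat \<Rightarrow> 'a) set) \<subseteq> Lsub l
    \<and> bij_betw (dirlim_in (Lsub l) (bmap l k))
         (Lsub l :: (nat \<Rightarrow> 'a) set) (dirlim (Lsub l) (bmap l k))
    \<and> bij_betw (dirlim_incl (Lprime l) (bmap l k))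
         (dirlim (Lsub l :: (nat \<Rightarrow> 'a) set) (bmap l k)) (dirlim (Lprime l) (bmap l k))"
proof -
  have "0 < l" using assms(1) prime_gt_0_nat by blast
  have "(of_nat (k*l + j) :: 'a) dvd 1" if "0 < j" "j < l" for j
  proof (rule of_nat_dvd_1_if_coprime[OF _ assms(3)])
    have "\<not> l dvd j" using that by (auto dest: dvd_imp_le)
    then have "coprime l (k*l + j)"
      using assms(1) by (simp add: prime_imp_coprime dvd_add_right_iff)
    then show "coprime (k*l + j) (l ^ \<nu>)" by (simp add: coprime_commute)
  qed
  then have bij: "bij_betw (bmap l k) (Lsub l :: (nat \<Rightarrow> 'a) set) (Lsub l)"
    by (rule bij_betw_bmap_Lsub)
  have "(of_nat (k*l) :: 'a) ^ \<nu> = of_nat (k ^ \<nu>) * of_nat (l ^ \<nu>)"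
    by (simp add: power_mult_distrib)
  then have into: "(bmap l k ^^ \<nu>) f \<in> Lsub l" for f :: "nat \<Rightarrow> 'a"
    using \<open>0 < l\<close> assms(2,3) by (simp add: funpow_bmap_Lsub)
  have "(Lsub l :: (nat \<Rightarrow> 'a) set) \<subseteq> Lprime l" by (auto simp: Lsub_def)
  from bij_betw_dirlim_incl[OF this into] show ?thesis
    using bmap_Lsub bij_betw_dirlim_in[OF bij] by simp
qed

end
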